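(* Let $G$ be an abelian group and $S\subset G$ a subset, and let $\Gamma(G,S)$ be the Cayley sum graph. \begin{enumerate} \item If $S$ is a Sidon set in $G$, then the $4$-cycle $C_4$ is not a subgraph of $\Gamma(G,S)$. \item If $S$ is a partial symmetric Sidon set in $G$, then the complete bipartite graph $K_{2,3}$ is not a subgraph of $\Gamma(G,S)$. \end{enumerate}
   Context: The Cayley sum graph $\Gamma(G,S)$ has vertex set $G$, with $x$ and $y$ joined by an edge (a loop if $x=y$) if and only if $x+y\in S$. A subset $S\subset G$ is a Sidon set if every solution $(\alpha,\beta,\gamma,\delta)\in S^4$ of $\alpha+\beta=\gamma+\delta$ satisfies $\alpha\in\{\gamma,\delta\}$. $S$ is a partial symmetric Sidon set with center $a_0\in S$ if every solution $(\alpha,\beta,\gamma,\delta)\in S^4$ of $\alpha+\beta=\gamma+\delta$ satisfies either $\alpha\in\{\gamma,\delta\}$ or $\alpha+\beta=\gamma+\delta=a_0$; $S$ is a partial symmetric Sidon set if it is one with center some $a_0\in S$. "$H$ is a subgraph" means there is an injective map from the vertices of $H$ to $G$ sending edges of $H$ to edges of $\Gamma(G,S)$. *)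

theory Defs
  imports Main
begin

definition cayley_sum_edge :: "'a::ab_group_add set \<Rightarrow> 'a \<Rightarrow> 'a \<Rightarrow> bool" where
  "cayley_sum_edge S x y \<longleftrightarrow> x + y \<in> S"

definition sidon_set :: "'a::ab_group_add set \<Rightarrow> bool" where
  "sidon_set S \<longleftrightarrow> (\<forall>\<alpha>\<in>S. \<forall>\<beta>\<in>S. \<forall>\<gamma>\<in>S. \<forall>\<delta>\<in>S.
      \<alpha> + \<beta> = \<gamma> + \<delta> \<longrightarrow> \<alpha> \<in> {\<gamma>, \<delta>})"

definition partial_symmetric_sidon_center :: "'a::ab_group_add set \<Rightarrow> 'a \<Rightarrow> bool" where
  "partial_symmetric_sidon_center S a0 \<longleftrightarrow> a0 \<in> S \<and>
     (\<forall>\<alpha>\<in>S. \<forall>\<beta>\<in>S. \<forall>\<gamma>\<in>S. \<forall>\<delta>\<in>S.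
        \<alpha> + \<beta> = \<gamma> + \<delta> \<longrightarrow> \<alpha> \<in> {\<gamma>, \<delta>} \<or> (\<alpha> + \<beta> = a0 \<and> \<gamma> + \<delta> = a0))"

definition partial_symmetric_sidon :: "'a::ab_group_add set \<Rightarrow> bool" where
  "partial_symmetric_sidon S \<longleftrightarrow> (\<exists>a0. partial_symmetric_sidon_center S a0)"

text \<open>A graph H with vertex set V and edge set E (unordered edges as pairs) is a subgraph
  of the Cayley sum graph if there is an injective map V \<rightarrow> G sending edges to edges.\<close>
definition subgraph_of_cayley_sum :: "'v set \<Rightarrow> ('v \<times> 'v) set \<Rightarrow> 'a::ab_group_add set \<Rightarrow> bool" where
  "subgraph_of_cayley_sum V E S \<longleftrightarrow>
     (\<exists>f :: 'v \<Rightarrow> 'a. inj_on f V \<and> (\<forall>(u, w)\<in>E. cayley_sum_edge S (f u) (f w)))"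

definition C4_vertices :: "nat set" where "C4_vertices = {0, 1, 2, 3}"
definition C4_edges :: "(nat \<times> nat) set" where
  "C4_edges = {(0, 1), (1, 2), (2, 3), (3, 0)}"

definition K23_vertices :: "nat set" where "K23_vertices = {0, 1, 2, 3, 4}"
definition K23_edges :: "(nat \<times> nat) set" where
  "K23_edges = {(i, j). i \<in> {0, 1} \<and> j \<in> {2, 3, 4}}"

end

theory Submission
  imports Defs
begin

text \<open>A 4-cycle x, y, x', y' in the Cayley sum graph yields the relation
  (x + y) + (x' + y') = (x + y') + (x' + y) between four elements of S. For a Sidon set this
  forces x = x' or y = y'. For a partial symmetric Sidon set with center a0 and distinct
  vertices it forces x + x' + y + y' = a0; since K_{2,3} contains two 4-cycles through x, x', y
  whose fourth vertices y', y'' differ, cancellation gives y' = y''.\<close>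

lemma sidon_setD:
  assumes "sidon_set S" "\<alpha> \<in> S" "\<beta> \<in> S" "\<gamma> \<in> S" "\<delta> \<in> S" "\<alpha> + \<beta> = \<gamma> + \<delta>"
  shows "\<alpha> = \<gamma> \<or> \<alpha> = \<delta>"
  using assms unfolding sidon_set_def by blast

lemma partial_symmetric_sidon_centerD:
  assumes "partial_symmetric_sidon_center S a0" "\<alpha> \<in> S" "\<beta> \<in> S" "\<gamma> \<in> S" "\<delta> \<in> S"
    and "\<alpha> + \<beta> = \<gamma> + \<delta>" "\<alpha> \<noteq> \<gamma>" "\<alpha> \<noteq> \<delta>"
  shows "\<alpha> + \<beta> = a0"
  using assms unfolding partial_symmetric_sidon_center_def by blast

lemma four_cycle_sum_eq:
  fixes x x' y y' :: "'a::ab_semigroup_add"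
  shows "(x + y) + (x' + y') = (x + y') + (x' + y)"
  by (simp add: ac_simps)

lemma sidon_set_four_cycle:
  assumes "sidon_set S" "x + y \<in> S" "x + y' \<in> S" "x' + y \<in> S" "x' + y' \<in> S"
  shows "x = x' \<or> y = y'"
  using sidon_setD[OF assms(1,2,5,3,4) four_cycle_sum_eq] by (auto simp: add.commute)

lemma partial_symmetric_sidon_center_four_cycle:
  assumes "partial_symmetric_sidon_center S a0"
    and "x + y \<in> S" "x + y' \<in> S" "x' + y \<in> S" "x' + y' \<in> S" "x \<noteq> x'" "y \<noteq> y'"
  shows "x + x' + y + y' = a0"
proof -
  have "(x + y) + (x' + y') = a0"
    using partial_symmetric_sidon_centerD[OF assms(1,2,5,3,4) four_cycle_sum_eq] assms(6,7)
    by (auto simp: add.commute)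
  then show ?thesis by (simp add: ac_simps)
qed

lemma subgraph_of_cayley_sumE:
  assumes "subgraph_of_cayley_sum V E S"
  obtains f where "inj_on f V" "\<And>u w. (u, w) \<in> E \<Longrightarrow> f u + f w \<in> S"
  using assms unfolding subgraph_of_cayley_sum_def cayley_sum_edge_def by blast

lemma sidon_set_no_C4:
  assumes "sidon_set S"
  shows "\<not> subgraph_of_cayley_sum C4_vertices C4_edges S"
proof
  assume "subgraph_of_cayley_sum C4_vertices C4_edges S"
  then obtain f where inj: "inj_on f C4_vertices"
    and edge: "\<And>u w. (u, w) \<in> C4_edges \<Longrightarrow> f u + f w \<in> S"
    using subgraph_of_cayley_sumE by blast
  have "f 0 + f 1 \<in> S" "f 0 + f 3 \<in> S" "f 2 + f 1 \<in> S" "f 2 + f 3 \<in> S"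
    using edge[of 0 1] edge[of 3 0] edge[of 1 2] edge[of 2 3]
    by (simp_all add: C4_edges_def add.commute)
  then have "f 0 = f 2 \<or> f 1 = f 3"
    by (rule sidon_set_four_cycle[OF assms])
  moreover have "f 0 \<noteq> f 2" "f 1 \<noteq> f 3"
    using inj_onD[OF inj] by (fastforce simp: C4_vertices_def)+
  ultimately show False by blast
qed

lemma partial_symmetric_sidon_no_K23:
  assumes "partial_symmetric_sidon S"
  shows "\<not> subgraph_of_cayley_sum K23_vertices K23_edges S"
proof
  assume "subgraph_of_cayley_sum K23_vertices K23_edges S"
  then obtain f where inj: "inj_on f K23_vertices"
    and edge: "\<And>u w. (u, w) \<in> K23_edges \<Longrightarrow> f u + f w \<in> S"
    using subgraph_of_cayley_sumE by blast
  obtain a0 where center: "partial_symmetric_sidon_center S a0"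
    using assms unfolding partial_symmetric_sidon_def by blast
  have in_S: "f i + f j \<in> S" if "i \<in> {0, 1}" "j \<in> {2, 3, 4}" for i j
    using edge that by (simp add: K23_edges_def)
  have distinct: "f 0 \<noteq> f 1" "f 2 \<noteq> f 3" "f 2 \<noteq> f 4" "f 3 \<noteq> f 4"
    using inj_onD[OF inj] by (fastforce simp: K23_vertices_def)+
  have "f 0 + f 1 + f 2 + f 3 = a0" "f 0 + f 1 + f 2 + f 4 = a0"
    using partial_symmetric_sidon_center_four_cycle[OF center in_S in_S in_S in_S] distinct
    by simp_all
  then have "f 3 = f 4" by (metis add_left_cancel)
  with distinct show False by simp
qed

theorem proposition3p1:
  fixes S :: "'a::ab_group_add set"
  shows "(sidon_set S \<longrightarrow> \<not> subgraph_of_cayley_sum C4_vertices C4_edges S)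
    \<and> (partial_symmetric_sidon S \<longrightarrow> \<not> subgraph_of_cayley_sum K23_vertices K23_edges S)"
  using sidon_set_no_C4 partial_symmetric_sidon_no_K23 by blast

end
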